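(* Let $M$ be a duplicial module in a pre-additive category. For all $n\ge0$, $$\pi_n=(1-b_{n+1}d_n)^{n+1}(1-d_{n-1}b_n)^n .$$
   Context: Let $\mathcal A$ be a pre-additive category. Let $\Lambda_+$ be the category with objects $[n]$, $n\ge0$, where $\Lambda_+([m],[n])$ is the set of weakly monotone $f:\mathbb Z\to\mathbb Z$ with $f(j+m+1)=f(j)+n+1$ for all $j$ and $f(0)\ge0$. Define $\varepsilon^n_i:[n-1]\to[n]$ ($n\ge1$, $0\le i\le n$) by $\varepsilon^n_i(j)=j$ for $0\le j<i$, $j+1$ for $i\le j\le n-1$, and $\eta^n_i:[n+1]\to[n]$ ($0\le i\le n+1$) by $\eta^n_i(j)=j$ for $0\le j\le i$, $j-1$ for $i<j\le n+1$. A duplicial module is a functor $M:\Lambda_+^{op}\to\mathcal A$; $M_n=M([n])$, $\partial_{n,i}=M(\varepsilon^n_i):M_n\to M_{n-1}$, $s_{n,i}=M(\eta^n_i):M_n\to M_{n+1}$. Convention $M_{-1}=0$, maps into/out of it zero. Define $b_n=\sum_{i=0}^n(-1)^i\partial_{n,i}$ ($b_0=0$), $d_n=\sum_{i=0}^{n+1}(-1)^is_{n,i}$ ($d_{-1}=0$), the Karoubi operator $\kappa_n=(-1)^n(\partial_{n+1,0}s_{n,n+1}-s_{n-1,n}\partial_{n,0})$ (so $\kappa_0=\partial_{1,0}s_{0,1}$), and the Dwyer–Kan operator $\pi_n=(-1)^n\partial_{n+1,0}\kappa_{n+1}^n s_{n,n+1}$. *)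

theory Defs
  imports Main
begin

record ('o, 'm) preadd_cat =
  Ob   :: "'o set"
  Mor  :: "'m set"
  Dom  :: "'m \<Rightarrow> 'o"
  Cod  :: "'m \<Rightarrow> 'o"
  Id   :: "'o \<Rightarrow> 'm"
  Comp :: "'m \<Rightarrow> 'm \<Rightarrow> 'm"   (* Comp g f = g \<circ> f  (first f, then g) *)
  Add  :: "'m \<Rightarrow> 'm \<Rightarrow> 'm"
  Zero :: "'o \<Rightarrow> 'o \<Rightarrow> 'm"
  Neg  :: "'m \<Rightarrow> 'm"

definition hom :: "('o, 'm) preadd_cat \<Rightarrow> 'o \<Rightarrow> 'o \<Rightarrow> 'm set" where
  "hom C a b = {f \<in> Mor C. Dom C f = a \<and> Cod C f = b}"

definition preadditive :: "('o, 'm) preadd_cat \<Rightarrow> bool" where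
  "preadditive C \<longleftrightarrow>
     (\<forall>f\<in>Mor C. Dom C f \<in> Ob C \<and> Cod C f \<in> Ob C) \<and>
     (\<forall>a\<in>Ob C. Id C a \<in> hom C a a) \<and>
     (\<forall>a\<in>Ob C. \<forall>b\<in>Ob C. \<forall>c\<in>Ob C. \<forall>f\<in>hom C a b. \<forall>g\<in>hom C b c.
        Comp C g f \<in> hom C a c) \<and>
     (\<forall>f\<in>Mor C. Comp C f (Id C (Dom C f)) = f \<and> Comp C (Id C (Cod C f)) f = f) \<and>
     (\<forall>a\<in>Ob C. \<forall>b\<in>Ob C. \<forall>c\<in>Ob C. \<forall>d\<in>Ob C.
        \<forall>f\<in>hom C a b. \<forall>g\<in>hom C b c. \<forall>h\<in>hom C c d.
        Comp C h (Comp C g f) = Comp C (Comp C h g) f) \<and>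
     (\<forall>a\<in>Ob C. \<forall>b\<in>Ob C.
        Zero C a b \<in> hom C a b \<and>
        (\<forall>f\<in>hom C a b. \<forall>g\<in>hom C a b.
           Add C f g \<in> hom C a b \<and> Add C f g = Add C g f) \<and>
        (\<forall>f\<in>hom C a b. \<forall>g\<in>hom C a b. \<forall>h\<in>hom C a b.
           Add C (Add C f g) h = Add C f (Add C g h)) \<and>
        (\<forall>f\<in>hom C a b. Add C f (Zero C a b) = f \<and>
           Neg C f \<in> hom C a b \<and> Add C f (Neg C f) = Zero C a b)) \<and>
     (\<forall>a\<in>Ob C. \<forall>b\<in>Ob C. \<forall>c\<in>Ob C.
        (\<forall>f\<in>hom C a b. \<forall>f'\<in>hom C a b. \<forall>g\<in>hom C b c.
           Comp C g (Add C f f') = Add C (Comp C g f) (Comp C g f')) \<and>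
        (\<forall>f\<in>hom C a b. \<forall>g\<in>hom C b c. \<forall>g'\<in>hom C b c.
           Comp C (Add C g g') f = Add C (Comp C g f) (Comp C g' f)))"

definition lam_mor :: "nat \<Rightarrow> nat \<Rightarrow> (int \<Rightarrow> int) \<Rightarrow> bool" where
  "lam_mor m n f \<longleftrightarrow> mono f \<and> (\<forall>j. f (j + int m + 1) = f j + int n + 1) \<and> f 0 \<ge> 0"

text \<open>epsilon^n_i : [n-1] -> [n] (n >= 1), extended periodically.\<close>
definition eps :: "nat \<Rightarrow> nat \<Rightarrow> int \<Rightarrow> int" where
  "eps n i j = (let q = j div int n; r = j mod int n in
                 q * (int n + 1) + (if r < int i then r else r + 1))"

text \<open>eta^n_i : [n+1] -> [n], extended periodically.\<close>
definition eta :: "nat \<Rightarrow> nat \<Rightarrow> int \<Rightarrow> int" where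
  "eta n i j = (let q = j div (int n + 2); r = j mod (int n + 2) in
                 q * (int n + 1) + (if r \<le> int i then r else r - 1))"

text \<open>A duplicial module is a functor M : Lambda_+^op -> C, given by objects
  MO n = M_n and, for f : [m] -> [n] in Lambda_+, a morphism MM m n f : M_n -> M_m.\<close>

definition duplicial :: "('o, 'm) preadd_cat \<Rightarrow> (nat \<Rightarrow> 'o)
      \<Rightarrow> (nat \<Rightarrow> nat \<Rightarrow> (int \<Rightarrow> int) \<Rightarrow> 'm) \<Rightarrow> bool" where
  "duplicial C MO MM \<longleftrightarrow>
     (\<forall>n. MO n \<in> Ob C) \<and>
     (\<forall>m n f. lam_mor m n f \<longrightarrow> MM m n f \<in> hom C (MO n) (MO m)) \<and>
     (\<forall>m. MM m m id = Id C (MO m)) \<and>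
     (\<forall>l m n f g. lam_mor l m f \<longrightarrow> lam_mor m n g \<longrightarrow>
        MM l n (g \<circ> f) = Comp C (MM l m f) (MM m n g))"

definition sgn_mor :: "('o, 'm) preadd_cat \<Rightarrow> nat \<Rightarrow> 'm \<Rightarrow> 'm" where
  "sgn_mor C k x = (if even k then x else Neg C x)"

definition alt_sum :: "('o, 'm) preadd_cat \<Rightarrow> 'o \<Rightarrow> 'o \<Rightarrow> (nat \<Rightarrow> 'm) \<Rightarrow> nat \<Rightarrow> 'm" where
  "alt_sum C a b F k = foldr (\<lambda>i acc. Add C (sgn_mor C i (F i)) acc) [0..<k] (Zero C a b)"

definition mpow :: "('o, 'm) preadd_cat \<Rightarrow> 'o \<Rightarrow> 'm \<Rightarrow> nat \<Rightarrow> 'm" where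
  "mpow C a f k = (Comp C f ^^ k) (Id C a)"

definition one_minus :: "('o, 'm) preadd_cat \<Rightarrow> 'o \<Rightarrow> 'm \<Rightarrow> 'm" where
  "one_minus C a f = Add C (Id C a) (Neg C f)"

definition face :: "(nat \<Rightarrow> nat \<Rightarrow> (int \<Rightarrow> int) \<Rightarrow> 'm) \<Rightarrow> nat \<Rightarrow> nat \<Rightarrow> 'm" where
  "face MM n i = MM (n - 1) n (eps n i)"

definition degen :: "(nat \<Rightarrow> nat \<Rightarrow> (int \<Rightarrow> int) \<Rightarrow> 'm) \<Rightarrow> nat \<Rightarrow> nat \<Rightarrow> 'm" where
  "degen MM n i = MM (n + 1) n (eta n i)"

text \<open>b_n = sum_{i=0}^n (-1)^i partial_{n,i} : M_n -> M_{n-1}; only used for n >= 1.\<close>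
definition bop :: "('o, 'm) preadd_cat \<Rightarrow> (nat \<Rightarrow> 'o)
      \<Rightarrow> (nat \<Rightarrow> nat \<Rightarrow> (int \<Rightarrow> int) \<Rightarrow> 'm) \<Rightarrow> nat \<Rightarrow> 'm" where
  "bop C MO MM n = alt_sum C (MO n) (MO (n - 1)) (face MM n) (n + 1)"

definition dop :: "('o, 'm) preadd_cat \<Rightarrow> (nat \<Rightarrow> 'o)
      \<Rightarrow> (nat \<Rightarrow> nat \<Rightarrow> (int \<Rightarrow> int) \<Rightarrow> 'm) \<Rightarrow> nat \<Rightarrow> 'm" where
  "dop C MO MM n = alt_sum C (MO n) (MO (n + 1)) (degen MM n) (n + 2)"

text \<open>Karoubi operator kappa_n = (-1)^n (partial_{n+1,0} s_{n,n+1} - s_{n-1,n} partial_{n,0}),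
  for n >= 1 (the only case used below).\<close>
definition karoubi :: "('o, 'm) preadd_cat \<Rightarrow> (nat \<Rightarrow> nat \<Rightarrow> (int \<Rightarrow> int) \<Rightarrow> 'm) \<Rightarrow> nat \<Rightarrow> 'm" where
  "karoubi C MM n = sgn_mor C n
     (Add C (Comp C (face MM (n + 1) 0) (degen MM n (n + 1)))
            (Neg C (Comp C (degen MM (n - 1) n) (face MM n 0))))"

definition dwyer_kan :: "('o, 'm) preadd_cat \<Rightarrow> (nat \<Rightarrow> 'o)
      \<Rightarrow> (nat \<Rightarrow> nat \<Rightarrow> (int \<Rightarrow> int) \<Rightarrow> 'm) \<Rightarrow> nat \<Rightarrow> 'm" where
  "dwyer_kan C MO MM n = sgn_mor C n
     (Comp C (face MM (n + 1) 0)
        (Comp C (mpow C (MO (n + 1)) (karoubi C MM (n + 1)) n) (degen MM n (n + 1))))"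

end

(*
  The identity is first proved in the integral monoid ring of all maps Z -> Z, where b, d,
  kappa and pi have universal counterparts zb, zd, zkaroubi and zdwyer_kan, and is then
  transported to M along the realization x |-> M(x), which is additive and turns products
  into composites. Ring products follow composition in Lambda_+, so they are written in the
  reverse order of the corresponding composites in the category.

  In the ring let X = d_n b_(n+1) and Y = b_n d_(n-1) be the elements realizing b_(n+1) d_n and
  d_(n-1) b_n. Since b b = 0 and d d = 0 we have X Y = Y X = 0, and the cosimplicial identities
  give kappa_n = 1 - X - Y = (1 - Y) (1 - X). Hence the right-hand side equals
  kappa_n^n (1 - X) = kappa_n^n - d_n kappa_(n+1)^n b_(n+1), as d commutes with kappa.
  Split b_(n+1) = epsilon_0 + b'. The b' part vanishes: d b' = - b' d, and kappa_m^m b'_m = 0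
  because kappa moves a face epsilon_i to epsilon_(i+1) and kills epsilon_m. In
  d_n kappa_(n+1)^n epsilon_0, the degeneracies eta_j with j < n are killed by kappa^n,
  eta_n kappa^n = (-1)^n kappa^n eta_0 and eta_0 epsilon_0 = 1; what remains is
  kappa_n^n - pi_n.
*)

theory Submission
  imports Defs "HOL-Library.Poly_Mapping" "HOL-Algebra.FiniteProduct"
begin

hide_const (open) Group.hom

section \<open>Maps of \<open>\<Lambda>\<^sub>+\<close>\<close>

definition quasi_periodic :: "int \<Rightarrow> int \<Rightarrow> (int \<Rightarrow> int) \<Rightarrow> bool" where
  "quasi_periodic p q f \<longleftrightarrow> (\<forall>j. f (j + p) = f j + q)"

lemma quasi_periodic_shift:
  assumes "quasi_periodic p q f"
  shows "f (j + k * p) = f j + k * q"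
proof (induction k rule: int_induct[where k = 0])
  case base
  then show ?case by simp
next
  case (step1 i)
  have "f (j + (i + 1) * p) = f ((j + i * p) + p)" by (simp add: algebra_simps)
  also have "\<dots> = f (j + i * p) + q" using assms by (simp add: quasi_periodic_def)
  finally show ?case using step1 by (simp add: algebra_simps)
next
  case (step2 i)
  have "f (j + i * p) = f ((j + (i - 1) * p) + p)" by (simp add: algebra_simps)
  also have "\<dots> = f (j + (i - 1) * p) + q" using assms by (simp add: quasi_periodic_def)
  finally show ?case using step2 by (simp add: algebra_simps)
qed

lemma quasi_periodic_eqI:
  assumes "p > 0" "quasi_periodic p q f" "quasi_periodic p q g"
    and "\<And>j. 0 \<le> j \<Longrightarrow> j < p \<Longrightarrow> f j = g j"
  shows "f = g"
proof
  fix x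
  have x: "x = x mod p + (x div p) * p" by simp
  have "f x = f (x mod p) + (x div p) * q" using quasi_periodic_shift[OF assms(2)] x by metis
  also have "\<dots> = g (x mod p) + (x div p) * q" using assms(1,4) by simp
  also have "\<dots> = g x" using quasi_periodic_shift[OF assms(3), of "x mod p" "x div p"] x by metis
  finally show "f x = g x" .
qed

lemma quasi_periodic_comp:
  "quasi_periodic p q g \<Longrightarrow> quasi_periodic q r f \<Longrightarrow> quasi_periodic p r (f \<circ> g)"
  by (simp add: quasi_periodic_def)

lemma quasi_periodic_id: "quasi_periodic p p id"
  by (simp add: quasi_periodic_def)

(* The periods are equational premises so that, through quasi_periodic_intros, these rules
   apply to composites whose intermediate period is only determined by unification. *)
lemma quasi_periodic_epsI:
  assumes "1 \<le> n" "p = int n" "q = int n + 1"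
  shows "quasi_periodic p q (eps n i)"
proof -
  have "int n \<noteq> 0" using assms(1) by simp
  then have "(j + int n) div int n = j div int n + 1" "(j + int n) mod int n = j mod int n" for j
    by (simp_all add: div_add_self2)
  then show ?thesis using assms(2,3) by (simp add: quasi_periodic_def eps_def Let_def algebra_simps)
qed

lemma quasi_periodic_etaI:
  assumes "p = int n + 2" "q = int n + 1"
  shows "quasi_periodic p q (eta n i)"
proof -
  have "(j + (int n + 2)) div (int n + 2) = j div (int n + 2) + 1"
       "(j + (int n + 2)) mod (int n + 2) = j mod (int n + 2)" for j
    by (simp_all add: div_add_self2)
  then show ?thesis using assms by (simp add: quasi_periodic_def eta_def Let_def algebra_simps)
qed

lemmas quasi_periodic_intros =
  quasi_periodic_comp quasi_periodic_id quasi_periodic_epsI quasi_periodic_etaI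

lemma eps_base: "0 \<le> j \<Longrightarrow> j < int n \<Longrightarrow> eps n i j = (if j < int i then j else j + 1)"
  by (simp add: eps_def Let_def div_pos_pos_trivial mod_pos_pos_trivial)

lemma eta_base: "0 \<le> j \<Longrightarrow> j < int n + 2 \<Longrightarrow> eta n i j = (if j \<le> int i then j else j - 1)"
  by (simp add: eta_def Let_def div_pos_pos_trivial mod_pos_pos_trivial)

lemma eps_eval:
  assumes "0 \<le> j" "j < 2 * int n"
  shows "eps n i j = (if j < int n then (if j < int i then j else j + 1)
                      else if j - int n < int i then j + 1 else j + 2)"
proof (cases "j < int n")
  case False
  have "quasi_periodic (int n) (int n + 1) (eps n i)"
    using assms by (intro quasi_periodic_epsI) simp_all
  then have "eps n i ((j - int n) + int n) = eps n i (j - int n) + (int n + 1)"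
    unfolding quasi_periodic_def by blast
  then show ?thesis using False assms by (simp add: eps_base)
qed (use assms in \<open>simp add: eps_base\<close>)

lemma eta_eval:
  assumes "0 \<le> j" "j < 2 * (int n + 2)"
  shows "eta n i j = (if j < int n + 2 then (if j \<le> int i then j else j - 1)
                      else if j - (int n + 2) \<le> int i then j - 1 else j - 2)"
proof (cases "j < int n + 2")
  case False
  have "eta n i ((j - (int n + 2)) + (int n + 2)) = eta n i (j - (int n + 2)) + (int n + 1)"
    using quasi_periodic_etaI[of "int n + 2" n "int n + 1" i] unfolding quasi_periodic_def by blast
  then show ?thesis using False assms by (simp add: eta_base)
qed (use assms in \<open>simp add: eta_base\<close>)

lemma mono_int_stepI:
  fixes f :: "int \<Rightarrow> int"
  assumes "\<And>j. f j \<le> f (j + 1)"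
  shows "mono f"
proof (rule monoI)
  fix x y :: int
  assume "x \<le> y"
  then obtain d :: nat where y: "y = x + int d" by (metis zle_iff_zadd)
  have "f x \<le> f (x + int d)"
  proof (induction d)
    case (Suc d)
    have "x + int (Suc d) = x + int d + 1" by simp
    then show ?case using Suc assms[of "x + int d"] by (metis order_trans)
  qed simp
  then show "f x \<le> f y" using y by simp
qed

lemma lam_morI:
  assumes qp: "quasi_periodic (int m + 1) (int n + 1) f"
    and step: "\<And>j. 0 \<le> j \<Longrightarrow> j < int m + 1 \<Longrightarrow> f j \<le> f (j + 1)"
    and "f 0 \<ge> 0"
  shows "lam_mor m n f"
proof -
  let ?p = "int m + 1"
  have "f j \<le> f (j + 1)" for j
  proof -
    have j: "j = j mod ?p + (j div ?p) * ?p" by (metis mod_div_mult_eq)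
    then have j': "j + 1 = (j mod ?p + 1) + (j div ?p) * ?p" by simp
    have "f (j mod ?p) \<le> f (j mod ?p + 1)"
      using pos_mod_bound[of ?p j] by (intro step) simp_all
    moreover have "f j = f (j mod ?p) + (j div ?p) * (int n + 1)"
      using quasi_periodic_shift[OF qp, of "j mod ?p" "j div ?p"] j by metis
    moreover have "f (j + 1) = f (j mod ?p + 1) + (j div ?p) * (int n + 1)"
      using quasi_periodic_shift[OF qp, of "j mod ?p + 1" "j div ?p"] j' by metis
    ultimately show ?thesis by simp
  qed
  then have "mono f" by (rule mono_int_stepI)
  with qp \<open>f 0 \<ge> 0\<close> show ?thesis by (simp add: lam_mor_def quasi_periodic_def add.assoc)
qed

lemma lam_mor_comp: "lam_mor l m f \<Longrightarrow> lam_mor m n g \<Longrightarrow> lam_mor l n (g \<circ> f)"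
  unfolding lam_mor_def mono_def by (auto simp: add.assoc intro: order_trans)

lemma lam_mor_id: "lam_mor m m id"
  by (simp add: lam_mor_def mono_def)

lemma lam_mor_eps:
  assumes "1 \<le> n" "i \<le> n"
  shows "lam_mor (n - 1) n (eps n i)"
proof (rule lam_morI)
  show "quasi_periodic (int (n - 1) + 1) (int n + 1) (eps n i)"
    using assms by (intro quasi_periodic_epsI) simp_all
  show "0 \<le> eps n i 0" using assms by (simp add: eps_base)
  fix j assume "0 \<le> j" "j < int (n - 1) + 1"
  then show "eps n i j \<le> eps n i (j + 1)" using assms by (simp add: eps_eval)
qed

lemma lam_mor_eta:
  assumes "i \<le> n + 1"
  shows "lam_mor (n + 1) n (eta n i)"
proof (rule lam_morI)
  show "quasi_periodic (int (n + 1) + 1) (int n + 1) (eta n i)"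
    by (intro quasi_periodic_etaI) simp_all
  show "0 \<le> eta n i 0" by (simp add: eta_base)
  fix j assume "0 \<le> j" "j < int (n + 1) + 1"
  then show "eta n i j \<le> eta n i (j + 1)" using assms by (simp add: eta_eval)
qed

lemma eps_comp_eps:
  assumes "1 \<le> n" "i \<le> j" "j \<le> n"
  shows "eps (n + 1) i \<circ> eps n j = eps (n + 1) (j + 1) \<circ> eps n i"
proof (rule quasi_periodic_eqI[where p = "int n" and q = "int n + 2"])
  show "quasi_periodic (int n) (int n + 2) (eps (n + 1) i \<circ> eps n j)"
    "quasi_periodic (int n) (int n + 2) (eps (n + 1) (j + 1) \<circ> eps n i)"
    using assms by (intro quasi_periodic_intros; simp)+
qed (use assms in \<open>auto simp: eps_eval\<close>)

lemma eta_comp_eta: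
  assumes "j \<le> i" "i \<le> n + 1"
  shows "eta n i \<circ> eta (n + 1) j = eta n j \<circ> eta (n + 1) (i + 1)"
proof (rule quasi_periodic_eqI[where p = "int n + 3" and q = "int n + 1"])
  show "quasi_periodic (int n + 3) (int n + 1) (eta n i \<circ> eta (n + 1) j)"
    "quasi_periodic (int n + 3) (int n + 1) (eta n j \<circ> eta (n + 1) (i + 1))"
    by (intro quasi_periodic_intros; simp)+
qed (use assms in \<open>auto simp: eta_eval\<close>)

lemma eta_comp_eps_id:
  assumes "i = j \<or> i = j + 1" "j \<le> n + 1"
  shows "eta n j \<circ> eps (n + 1) i = id"
proof (rule quasi_periodic_eqI[where p = "int n + 1" and q = "int n + 1"])
  show "quasi_periodic (int n + 1) (int n + 1) (eta n j \<circ> eps (n + 1) i)"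
    by (intro quasi_periodic_intros; simp)
qed (use assms in \<open>auto simp: eps_eval eta_eval quasi_periodic_id\<close>)

(* For i = 0 and j = n + 1 the two sides are kar_pos n and kar_neg n below, which differ. *)
lemma eta_comp_eps_less:
  assumes "1 \<le> n" "i < j" "j \<le> n + 1" "1 \<le> i \<or> j \<le> n"
  shows "eta n j \<circ> eps (n + 1) i = eps n i \<circ> eta (n - 1) (j - 1)"
proof (rule quasi_periodic_eqI[where p = "int n + 1" and q = "int n + 1"])
  show "quasi_periodic (int n + 1) (int n + 1) (eta n j \<circ> eps (n + 1) i)"
    "quasi_periodic (int n + 1) (int n + 1) (eps n i \<circ> eta (n - 1) (j - 1))"
    using assms by (intro quasi_periodic_intros; simp)+
qed (use assms in \<open>auto simp: eps_eval eta_eval of_nat_diff\<close>)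

lemma eta_comp_eps_greater:
  assumes "1 \<le> n" "j + 1 < i" "i \<le> n + 1"
  shows "eta n j \<circ> eps (n + 1) i = eps n (i - 1) \<circ> eta (n - 1) j"
proof (rule quasi_periodic_eqI[where p = "int n + 1" and q = "int n + 1"])
  show "quasi_periodic (int n + 1) (int n + 1) (eta n j \<circ> eps (n + 1) i)"
    "quasi_periodic (int n + 1) (int n + 1) (eps n (i - 1) \<circ> eta (n - 1) j)"
    using assms by (intro quasi_periodic_intros; simp)+
qed (use assms in \<open>auto simp: eps_eval eta_eval of_nat_diff\<close>)

(* M (kar_pos m) = \<partial>_(m+1,0) s_(m,m+1) and M (kar_neg m) = s_(m-1,m) \<partial>_(m,0) are the two
   terms of the Karoubi operator. *)
definition kar_pos :: "nat \<Rightarrow> int \<Rightarrow> int" where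
  "kar_pos m = eta m (m + 1) \<circ> eps (m + 1) 0"

definition kar_neg :: "nat \<Rightarrow> int \<Rightarrow> int" where
  "kar_neg m = eps m 0 \<circ> eta (m - 1) m"

lemma quasi_periodic_kar_posI:
  "p = int m + 1 \<Longrightarrow> q = int m + 1 \<Longrightarrow> quasi_periodic p q (kar_pos m)"
  unfolding kar_pos_def by (intro quasi_periodic_intros; simp)

lemma quasi_periodic_kar_negI:
  "1 \<le> m \<Longrightarrow> p = int m + 1 \<Longrightarrow> q = int m + 1 \<Longrightarrow> quasi_periodic p q (kar_neg m)"
  unfolding kar_neg_def by (intro quasi_periodic_intros; simp)

lemmas quasi_periodic_kar_intros =
  quasi_periodic_intros quasi_periodic_kar_posI quasi_periodic_kar_negI

lemma kar_pos_comp_eps_last: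
  "kar_pos (m + 1) \<circ> eps (m + 1) (m + 1) = kar_neg (m + 1) \<circ> eps (m + 1) (m + 1)"
proof (rule quasi_periodic_eqI[where p = "int m + 1" and q = "int m + 2"])
  show "quasi_periodic (int m + 1) (int m + 2) (kar_pos (m + 1) \<circ> eps (m + 1) (m + 1))"
    "quasi_periodic (int m + 1) (int m + 2) (kar_neg (m + 1) \<circ> eps (m + 1) (m + 1))"
    by (intro quasi_periodic_kar_intros; simp)+
qed (auto simp: kar_pos_def kar_neg_def eps_eval eta_eval)

lemma kar_pos_comp_eps:
  assumes "1 \<le> i" "i \<le> m"
  shows "kar_pos (m + 1) \<circ> eps (m + 1) i = eps (m + 1) (i + 1) \<circ> kar_pos m"
proof (rule quasi_periodic_eqI[where p = "int m + 1" and q = "int m + 2"])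
  show "quasi_periodic (int m + 1) (int m + 2) (kar_pos (m + 1) \<circ> eps (m + 1) i)"
    "quasi_periodic (int m + 1) (int m + 2) (eps (m + 1) (i + 1) \<circ> kar_pos m)"
    by (intro quasi_periodic_kar_intros; simp)+
qed (use assms in \<open>auto simp: kar_pos_def eps_eval eta_eval\<close>)

lemma kar_neg_comp_eps:
  assumes "1 \<le> i" "i \<le> m"
  shows "kar_neg (m + 1) \<circ> eps (m + 1) i = eps (m + 1) (i + 1) \<circ> kar_neg m"
proof (rule quasi_periodic_eqI[where p = "int m + 1" and q = "int m + 2"])
  show "quasi_periodic (int m + 1) (int m + 2) (kar_neg (m + 1) \<circ> eps (m + 1) i)"
    "quasi_periodic (int m + 1) (int m + 2) (eps (m + 1) (i + 1) \<circ> kar_neg m)"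
    using assms by (intro quasi_periodic_kar_intros; simp)+
qed (use assms in \<open>auto simp: kar_neg_def eps_eval eta_eval of_nat_diff\<close>)

lemma eta_first_comp_kar: "eta m 0 \<circ> kar_pos (m + 1) = eta m 0 \<circ> kar_neg (m + 1)"
proof (rule quasi_periodic_eqI[where p = "int m + 2" and q = "int m + 1"])
  show "quasi_periodic (int m + 2) (int m + 1) (eta m 0 \<circ> kar_pos (m + 1))"
    "quasi_periodic (int m + 2) (int m + 1) (eta m 0 \<circ> kar_neg (m + 1))"
    by (intro quasi_periodic_kar_intros; simp)+
qed (auto simp: kar_pos_def kar_neg_def eps_eval eta_eval)

lemma eta_comp_kar_pos:
  assumes "1 \<le> j" "j \<le> m"
  shows "eta m j \<circ> kar_pos (m + 1) = kar_pos m \<circ> eta m (j - 1)"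
proof (rule quasi_periodic_eqI[where p = "int m + 2" and q = "int m + 1"])
  show "quasi_periodic (int m + 2) (int m + 1) (eta m j \<circ> kar_pos (m + 1))"
    "quasi_periodic (int m + 2) (int m + 1) (kar_pos m \<circ> eta m (j - 1))"
    by (intro quasi_periodic_kar_intros; simp)+
qed (use assms in \<open>auto simp: kar_pos_def eps_eval eta_eval of_nat_diff\<close>)

lemma eta_comp_kar_neg:
  assumes "1 \<le> j" "j \<le> m"
  shows "eta m j \<circ> kar_neg (m + 1) = kar_neg m \<circ> eta m (j - 1)"
proof (rule quasi_periodic_eqI[where p = "int m + 2" and q = "int m + 1"])
  show "quasi_periodic (int m + 2) (int m + 1) (eta m j \<circ> kar_neg (m + 1))"
    "quasi_periodic (int m + 2) (int m + 1) (kar_neg m \<circ> eta m (j - 1))"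
    using assms by (intro quasi_periodic_kar_intros; simp)+
qed (use assms in \<open>auto simp: kar_neg_def eps_eval eta_eval of_nat_diff\<close>)

section \<open>The integral monoid ring of maps \<open>\<int> \<Rightarrow> \<int>\<close>\<close>

datatype endo = Endo (app: "int \<Rightarrow> int")

(* Poly_Mapping builds monoid rings over additively written monoids, so composition is + here. *)
instantiation endo :: monoid_add
begin

definition zero_endo :: endo where
  "zero_endo = Endo id"

definition plus_endo :: "endo \<Rightarrow> endo \<Rightarrow> endo" where
  "plus_endo f g = Endo (app f \<circ> app g)"

instance
proof
  fix f g h :: endo
  show "f + g + h = f + (g + h)" by (simp add: plus_endo_def o_assoc)
  show "0 + f = f" by (cases f) (simp add: plus_endo_def zero_endo_def)
  show "f + 0 = f" by (cases f) (simp add: plus_endo_def zero_endo_def)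
qed

end

type_synonym zendo = "endo \<Rightarrow>\<^sub>0 int"

definition of_map :: "(int \<Rightarrow> int) \<Rightarrow> zendo" where
  "of_map f = frag_of (Endo f)"

lemma of_map_comp: "of_map f * of_map g = of_map (f \<circ> g)"
  by (simp add: of_map_def mult_single plus_endo_def)

lemma of_map_id: "of_map id = 1"
  by (simp add: of_map_def zero_endo_def[symmetric])

definition signed :: "nat \<Rightarrow> 'a \<Rightarrow> 'a::ring" where
  "signed k x = (if even k then x else - x)"

lemma signed_0 [simp]: "signed 0 x = x"
  by (simp add: signed_def)

lemma signed_zero [simp]: "signed k 0 = 0"
  by (simp add: signed_def)

lemma signed_signed [simp]: "signed k (signed k x) = x"
  by (simp add: signed_def)

lemma signed_Suc: "signed (Suc k) x = - signed k x"
  by (simp add: signed_def)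

lemma signed_mult_left: "signed k x * y = signed k (x * y)"
  by (simp add: signed_def)

lemma signed_mult_right: "x * signed k y = signed k (x * y)"
  by (simp add: signed_def)

lemma signed_mult: "signed i x * signed j y = signed (i + j) (x * y)"
  by (simp add: signed_def)

lemma signed_diff: "signed k (x - y) = signed k x - signed k y"
  by (simp add: signed_def)

lemma signed_sum_mult:
  "(\<Sum>i\<in>A. signed (a i) (of_map (f i))) * (\<Sum>j\<in>B. signed (b j) (of_map (g j))) =
     (\<Sum>(i, j)\<in>A \<times> B. signed (a i + b j) (of_map (f i \<circ> g j)))"
  by (simp add: sum_product sum.cartesian_product signed_mult of_map_comp)

lemma sum_reindex_neg:
  fixes g h :: "'a \<Rightarrow> 'b::ab_group_add"
  assumes "bij_betw \<sigma> P Q" "\<And>p. p \<in> P \<Longrightarrow> g p = - h (\<sigma> p)"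
  shows "sum g P = - sum h Q"
proof -
  have "sum h Q = sum (\<lambda>p. h (\<sigma> p)) P" by (rule sum.reindex_bij_betw[OF assms(1), symmetric])
  moreover have "sum g P = sum (\<lambda>p. - h (\<sigma> p)) P" using assms(2) by (rule sum.cong[OF refl])
  ultimately show ?thesis by (simp add: sum_negf)
qed

lemma sum_partition:
  "finite A \<Longrightarrow> A = B \<union> C \<Longrightarrow> B \<inter> C = {} \<Longrightarrow> sum g A = sum g B + sum g C"
  by (simp add: sum.union_disjoint)

lemma sum_pairing_zero:
  fixes g :: "'a \<Rightarrow> 'b::ab_group_add"
  assumes "finite A" "A = P \<union> Q" "P \<inter> Q = {}" "bij_betw \<sigma> P Q"
    and "\<And>p. p \<in> P \<Longrightarrow> g (\<sigma> p) = - g p"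
  shows "sum g A = 0"
proof -
  have "sum g A = sum g P + sum g Q"
    using assms(1-3) by (rule sum_partition)
  moreover have "sum g P = - sum g Q"
    using assms(4) by (rule sum_reindex_neg) (simp add: assms(5))
  ultimately show ?thesis by simp
qed

definition zb :: "nat \<Rightarrow> zendo" where
  "zb n = (\<Sum>i<Suc n. signed i (of_map (eps n i)))"

definition zd :: "nat \<Rightarrow> zendo" where
  "zd n = (\<Sum>i<Suc (Suc n). signed i (of_map (eta n i)))"

definition zb_tail :: "nat \<Rightarrow> zendo" where
  "zb_tail n = (\<Sum>i<n. signed (Suc i) (of_map (eps n (Suc i))))"

definition zd_init :: "nat \<Rightarrow> zendo" where
  "zd_init n = (\<Sum>i<Suc n. signed i (of_map (eta n i)))"

definition zkaroubi :: "nat \<Rightarrow> zendo" where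
  "zkaroubi n = signed n (of_map (kar_pos n) - of_map (kar_neg n))"

definition zdwyer_kan :: "nat \<Rightarrow> zendo" where
  "zdwyer_kan n =
     signed n (of_map (eta n (n + 1)) * zkaroubi (n + 1) ^ n * of_map (eps (n + 1) 0))"

lemma zb_split: "zb (Suc n) = of_map (eps (Suc n) 0) + zb_tail (Suc n)"
  unfolding zb_def zb_tail_def by (subst sum.lessThan_Suc_shift) simp

lemma zd_split: "zd n = zd_init n + signed (Suc n) (of_map (eta n (Suc n)))"
  unfolding zd_def zd_init_def by simp

lemma zb_zb:
  assumes "1 \<le> n"
  shows "zb (Suc n) * zb n = 0"
proof -
  let ?A = "{..<Suc (Suc n)} \<times> {..<Suc n}"
  let ?g = "\<lambda>(i, j). signed (i + j) (of_map (eps (Suc n) i \<circ> eps n j))"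
  have "zb (Suc n) * zb n = sum ?g ?A"
    unfolding zb_def by (rule signed_sum_mult)
  also have "\<dots> = 0"
  proof (rule sum_pairing_zero)
    show "finite ?A" by simp
    show "?A = {p \<in> ?A. fst p \<le> snd p} \<union> {p \<in> ?A. snd p < fst p}" by auto
    show "{p \<in> ?A. fst p \<le> snd p} \<inter> {p \<in> ?A. snd p < fst p} = {}" by auto
    show "bij_betw (\<lambda>(i, j). (Suc j, i)) {p \<in> ?A. fst p \<le> snd p} {p \<in> ?A. snd p < fst p}"
      by (rule bij_betw_byWitness[where f' = "\<lambda>(i, j). (j, i - 1)"]) auto
    fix p assume "p \<in> {p \<in> ?A. fst p \<le> snd p}"
    then obtain i j where p: "p = (i, j)" "i \<le> j" "j \<le> n" by auto
    then have "eps (n + 1) i \<circ> eps n j = eps (n + 1) (j + 1) \<circ> eps n i"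
      using assms by (intro eps_comp_eps)
    then show "?g ((\<lambda>(i, j). (Suc j, i)) p) = - ?g p"
      using p by (simp add: signed_Suc add.commute)
  qed
  finally show ?thesis .
qed

lemma zd_zd: "zd n * zd (Suc n) = 0"
proof -
  let ?A = "{..<Suc (Suc n)} \<times> {..<Suc (Suc (Suc n))}"
  let ?g = "\<lambda>(i, j). signed (i + j) (of_map (eta n i \<circ> eta (Suc n) j))"
  have "zd n * zd (Suc n) = sum ?g ?A"
    unfolding zd_def by (rule signed_sum_mult)
  also have "\<dots> = 0"
  proof (rule sum_pairing_zero)
    show "finite ?A" by simp
    show "?A = {p \<in> ?A. snd p \<le> fst p} \<union> {p \<in> ?A. fst p < snd p}" by auto
    show "{p \<in> ?A. snd p \<le> fst p} \<inter> {p \<in> ?A. fst p < snd p} = {}" by auto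
    show "bij_betw (\<lambda>(i, j). (j, Suc i)) {p \<in> ?A. snd p \<le> fst p} {p \<in> ?A. fst p < snd p}"
      by (rule bij_betw_byWitness[where f' = "\<lambda>(i, j). (j - 1, i)"]) auto
    fix p assume "p \<in> {p \<in> ?A. snd p \<le> fst p}"
    then obtain i j where p: "p = (i, j)" "j \<le> i" "i \<le> n + 1" by auto
    then have "eta n i \<circ> eta (n + 1) j = eta n j \<circ> eta (n + 1) (i + 1)"
      by (intro eta_comp_eta)
    then show "?g ((\<lambda>(i, j). (j, Suc i)) p) = - ?g p"
      using p by (simp add: signed_Suc add.commute)
  qed
  finally show ?thesis .
qed

lemma zd_zb_tail_diagonal:
  "i \<le> n \<Longrightarrow> signed (i + Suc i) (of_map (eta n i \<circ> eps (Suc n) (Suc i)))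
      + signed (Suc i + Suc i) (of_map (eta n (Suc i) \<circ> eps (Suc n) (Suc i))) = 0"
  using eta_comp_eps_id[of "Suc i" "Suc i" n] eta_comp_eps_id[of "Suc i" i n]
  by (simp add: signed_def)

lemma zd_zb_tail:
  assumes n: "1 \<le> n"
  shows "zd n * zb_tail (Suc n) + zb_tail n * zd (n - 1) = 0"
proof -
  let ?A1 = "{..<Suc (Suc n)} \<times> {..<Suc n}"
  let ?A2 = "{..<n} \<times> {..<Suc (Suc (n - 1))}"
  let ?g1 = "\<lambda>(j, i). signed (j + Suc i) (of_map (eta n j \<circ> eps (Suc n) (Suc i)))"
  let ?g2 = "\<lambda>(i, j). signed (Suc i + j) (of_map (eps n (Suc i) \<circ> eta (n - 1) j))"
  let ?D = "{p \<in> ?A1. Suc (snd p) = fst p} \<union> {p \<in> ?A1. snd p = fst p}"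
  let ?U = "{p \<in> ?A1. Suc (snd p) < fst p}"
  let ?L = "{p \<in> ?A1. fst p < snd p}"
  let ?A2U = "{p \<in> ?A2. Suc (fst p) \<le> snd p}"
  let ?A2L = "{p \<in> ?A2. snd p < Suc (fst p)}"
  have "zd n * zb_tail (Suc n) = sum ?g1 (?D \<union> ?U) + sum ?g1 ?L"
    unfolding zd_def zb_tail_def signed_sum_mult by (rule sum_partition) auto
  moreover have "sum ?g1 (?D \<union> ?U) = sum ?g1 ?D + sum ?g1 ?U"
    by (rule sum.union_disjoint) auto
  moreover have "zb_tail n * zd (n - 1) = sum ?g2 ?A2U + sum ?g2 ?A2L"
    unfolding zd_def zb_tail_def signed_sum_mult by (rule sum_partition) auto
  moreover have "sum ?g1 ?D = 0"
  proof (rule sum_pairing_zero)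
    show "bij_betw (\<lambda>(j, i). (i, i)) {p \<in> ?A1. Suc (snd p) = fst p} {p \<in> ?A1. snd p = fst p}"
      by (rule bij_betw_byWitness[where f' = "\<lambda>(j, i). (Suc i, i)"]) auto
  qed (use zd_zb_tail_diagonal in \<open>auto simp: eq_neg_iff_add_eq_0\<close>)
  moreover have "sum ?g1 ?U = - sum ?g2 ?A2U"
  proof (rule sum_reindex_neg)
    show "bij_betw (\<lambda>(j, i). (i, j - 1)) ?U ?A2U"
      by (rule bij_betw_byWitness[where f' = "\<lambda>(i, j). (Suc j, i)"]) auto
    fix p assume "p \<in> ?U"
    then obtain j i where p: "p = (Suc j, i)" "Suc i < Suc j" "j \<le> n"
      by (cases p; cases "fst p") auto
    then have "eta n (Suc j) \<circ> eps (n + 1) (Suc i) = eps n (Suc i) \<circ> eta (n - 1) j"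
      using eta_comp_eps_less[of n "Suc i" "Suc j"] n by simp
    then show "?g1 p = - ?g2 ((\<lambda>(j, i). (i, j - 1)) p)"
      using p by (simp add: signed_Suc add.commute)
  qed
  moreover have "sum ?g1 ?L = - sum ?g2 ?A2L"
  proof (rule sum_reindex_neg)
    show "bij_betw (\<lambda>(j, i). (i - 1, j)) ?L ?A2L"
      by (rule bij_betw_byWitness[where f' = "\<lambda>(i, j). (j, Suc i)"]) auto
    fix p assume "p \<in> ?L"
    then obtain j i where p: "p = (j, Suc i)" "j < Suc i" "i < n"
      by (cases p; cases "snd p") auto
    then have "eta n j \<circ> eps (n + 1) (Suc (Suc i)) = eps n (Suc i) \<circ> eta (n - 1) j"
      using eta_comp_eps_greater[of n j "Suc (Suc i)"] n by simp
    then show "?g1 p = - ?g2 ((\<lambda>(j, i). (i - 1, j)) p)"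
      using p by (simp add: signed_Suc add.commute)
  qed
  ultimately show ?thesis by simp
qed

lemma zd_face0_add_face0_zd:
  assumes n: "1 \<le> n"
  shows "zd n * of_map (eps (Suc n) 0) + of_map (eps n 0) * zd (n - 1) = 1 - zkaroubi n"
proof -
  let ?F = "\<lambda>j. of_map (eps n 0 \<circ> eta (n - 1) j)"
  have ss: "Suc (Suc (n - 1)) = Suc n" using n by simp
  have "zd n * of_map (eps (Suc n) 0) = (\<Sum>j<Suc (Suc n). signed j (of_map (eta n j \<circ> eps (Suc n) 0)))"
    unfolding zd_def sum_distrib_right by (simp only: signed_mult_left of_map_comp)
  also have "\<dots> = of_map (eta n 0 \<circ> eps (Suc n) 0)
      + (\<Sum>j<n. signed (Suc j) (of_map (eta n (Suc j) \<circ> eps (Suc n) 0)))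
      + signed (Suc n) (of_map (kar_pos n))"
    by (subst sum.lessThan_Suc_shift) (simp add: kar_pos_def)
  also have "(\<Sum>j<n. signed (Suc j) (of_map (eta n (Suc j) \<circ> eps (Suc n) 0))) = - (\<Sum>j<n. signed j (?F j))"
  proof -
    have "eta n (Suc j) \<circ> eps (n + 1) 0 = eps n 0 \<circ> eta (n - 1) j" if "j < n" for j
      using that n eta_comp_eps_less[of n 0 "Suc j"] by simp
    then show ?thesis by (simp add: signed_Suc sum_negf)
  qed
  also have "eta n 0 \<circ> eps (Suc n) 0 = id"
    using eta_comp_eps_id[of 0 0 n] by simp
  also note of_map_id
  finally have A: "zd n * of_map (eps (Suc n) 0) =
      1 + - (\<Sum>j<n. signed j (?F j)) + signed (Suc n) (of_map (kar_pos n))" .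
  have B: "of_map (eps n 0) * zd (n - 1) = (\<Sum>j<n. signed j (?F j)) + signed n (of_map (kar_neg n))"
    unfolding zd_def ss sum_distrib_left using n
    by (simp add: signed_mult_right of_map_comp kar_neg_def)
  show ?thesis using A B by (simp add: zkaroubi_def signed_diff signed_Suc)
qed

lemma zkaroubi_eq:
  assumes n: "1 \<le> n"
  shows "zkaroubi n = 1 - zd n * zb (Suc n) - zb n * zd (n - 1)"
proof -
  have zb_n: "zb n = of_map (eps n 0) + zb_tail n" using zb_split[of "n - 1"] n by simp
  have "zd n * zb (Suc n) + zb n * zd (n - 1) =
      (zd n * of_map (eps (Suc n) 0) + of_map (eps n 0) * zd (n - 1))
      + (zd n * zb_tail (Suc n) + zb_tail n * zd (n - 1))"
    by (simp add: zb_split zb_n algebra_simps)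
  also have "\<dots> = 1 - zkaroubi n"
    using zd_face0_add_face0_zd[OF n] zd_zb_tail[OF n] by simp
  finally show ?thesis by (simp add: algebra_simps)
qed

lemma zd_zkaroubi:
  assumes n: "1 \<le> n"
  shows "zd n * zkaroubi (Suc n) = zkaroubi n * zd n"
proof -
  have "zd n * zkaroubi (Suc n) = zd n - zd n * zb (Suc n) * zd n"
    using zkaroubi_eq[of "Suc n"] zd_zd[of n]
    by (simp add: right_diff_distrib mult.assoc[symmetric])
  also have "\<dots> = zkaroubi n * zd n"
    using zkaroubi_eq[OF n] zd_zd[of "n - 1"] n
    by (simp add: left_diff_distrib mult.assoc)
  finally show ?thesis .
qed

lemma zd_zkaroubi_pow: "1 \<le> n \<Longrightarrow> zd n * zkaroubi (Suc n) ^ k = zkaroubi n ^ k * zd n"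
proof (induction k)
  case (Suc k)
  have "zd n * zkaroubi (Suc n) ^ Suc k = (zd n * zkaroubi (Suc n)) * zkaroubi (Suc n) ^ k"
    by (simp add: mult.assoc)
  also have "\<dots> = zkaroubi n ^ Suc k * zd n"
    using Suc zd_zkaroubi[OF Suc.prems] by (simp add: mult.assoc)
  finally show ?case .
qed simp

lemma zkaroubi_face_last: "zkaroubi (Suc m) * of_map (eps (Suc m) (Suc m)) = 0"
  using kar_pos_comp_eps_last[of m]
  by (simp add: zkaroubi_def signed_mult_left of_map_comp left_diff_distrib)

lemma zkaroubi_face:
  assumes "1 \<le> i" "i \<le> m"
  shows "zkaroubi (Suc m) * of_map (eps (Suc m) i) = - (of_map (eps (Suc m) (Suc i)) * zkaroubi m)"
  using kar_pos_comp_eps[OF assms] kar_neg_comp_eps[OF assms]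
  by (simp add: zkaroubi_def signed_mult_left signed_mult_right of_map_comp
      left_diff_distrib right_diff_distrib signed_Suc signed_diff)

lemma zdegen0_zkaroubi: "of_map (eta m 0) * zkaroubi (Suc m) = 0"
  using eta_first_comp_kar[of m]
  by (simp add: zkaroubi_def signed_mult_right of_map_comp right_diff_distrib)

lemma zdegen_zkaroubi:
  assumes "1 \<le> j" "j \<le> m"
  shows "of_map (eta m j) * zkaroubi (Suc m) = - (zkaroubi m * of_map (eta m (j - 1)))"
  using eta_comp_kar_pos[OF assms] eta_comp_kar_neg[OF assms]
  by (simp add: zkaroubi_def signed_mult_left signed_mult_right of_map_comp
      left_diff_distrib right_diff_distrib signed_Suc signed_diff)

lemma zkaroubi_pow_face:
  "1 \<le> i \<Longrightarrow> i \<le> m \<Longrightarrow> m < i + k \<Longrightarrow> zkaroubi m ^ k * of_map (eps m i) = 0"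
proof (induction k arbitrary: i)
  case (Suc k)
  obtain m' where m: "m = Suc m'" using Suc.prems by (cases m) auto
  have "zkaroubi m ^ Suc k * of_map (eps m i) = zkaroubi m ^ k * (zkaroubi m * of_map (eps m i))"
    by (simp only: power_Suc2 mult.assoc)
  also have "\<dots> = 0"
  proof (cases "i = m")
    case True
    then show ?thesis using zkaroubi_face_last[of m'] m by simp
  next
    case False
    then have "zkaroubi m * of_map (eps m i) = - (of_map (eps m (Suc i)) * zkaroubi m')"
      using zkaroubi_face[of i m'] Suc.prems m by simp
    moreover have "zkaroubi m ^ k * of_map (eps m (Suc i)) = 0"
      using Suc.IH[of "Suc i"] Suc.prems False by simp
    ultimately show ?thesis by (simp add: mult.assoc[symmetric])
  qed
  finally show ?case .
qed simp

lemma zkaroubi_pow_zb_tail: "zkaroubi m ^ m * zb_tail m = 0"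
  unfolding zb_tail_def sum_distrib_left
  by (rule sum.neutral) (simp add: signed_mult_right zkaroubi_pow_face)

lemma zdegen_zkaroubi_pow:
  "j \<le> n \<Longrightarrow> of_map (eta n j) * zkaroubi (Suc n) ^ k =
     (if k \<le> j then signed k (zkaroubi n ^ k * of_map (eta n (j - k))) else 0)"
proof (induction k arbitrary: j)
  case (Suc k)
  have "of_map (eta n j) * zkaroubi (Suc n) ^ Suc k =
      (of_map (eta n j) * zkaroubi (Suc n)) * zkaroubi (Suc n) ^ k"
    by (simp only: power_Suc mult.assoc)
  also have "\<dots> = (if Suc k \<le> j then signed (Suc k) (zkaroubi n ^ Suc k * of_map (eta n (j - Suc k))) else 0)"
  proof (cases "j = 0")
    case True
    then show ?thesis using zdegen0_zkaroubi[of n] by simp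
  next
    case False
    then have "(of_map (eta n j) * zkaroubi (Suc n)) * zkaroubi (Suc n) ^ k =
        - (zkaroubi n * (of_map (eta n (j - 1)) * zkaroubi (Suc n) ^ k))"
      using zdegen_zkaroubi[of j n] Suc.prems by (simp add: mult.assoc)
    also have "\<dots> = (if Suc k \<le> j then signed (Suc k) (zkaroubi n ^ Suc k * of_map (eta n (j - Suc k))) else 0)"
      using Suc.IH[of "j - 1"] Suc.prems False
      by (auto simp: signed_mult_right signed_Suc mult.assoc Suc_diff_Suc)
    finally show ?thesis .
  qed
  finally show ?case .
qed simp

lemma zd_init_zkaroubi_pow: "zd_init n * zkaroubi (Suc n) ^ n = zkaroubi n ^ n * of_map (eta n 0)"
proof -
  have "zd_init n * zkaroubi (Suc n) ^ n = (\<Sum>j<Suc n. signed j (of_map (eta n j) * zkaroubi (Suc n) ^ n))"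
    unfolding zd_init_def sum_distrib_right by (simp only: signed_mult_left)
  also have "\<dots> = signed n (of_map (eta n n) * zkaroubi (Suc n) ^ n)"
    by (simp add: zdegen_zkaroubi_pow)
  finally show ?thesis by (simp add: zdegen_zkaroubi_pow)
qed

lemma mult_power_commuting:
  fixes a b :: "'a::monoid_mult"
  assumes "a * b = b * a"
  shows "a ^ n * b ^ n = (a * b) ^ n"
proof (induction n)
  case (Suc n)
  have ab: "(a * b) * a = a * (a * b)" using assms by (metis mult.assoc)
  have "a ^ Suc n * b ^ Suc n = a * (a ^ n * b ^ n) * b"
    unfolding power_Suc[of a] power_Suc2[of b] by (simp only: mult.assoc)
  also have "\<dots> = a * (a * b) ^ n * b" using Suc.IH by simp
  also have "\<dots> = (a * b) ^ n * a * b" using power_commuting_commutes[OF ab, of n] by simp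
  also have "\<dots> = (a * b) ^ Suc n" by (simp only: power_Suc2 mult.assoc)
  finally show ?case .
qed simp

lemma zrhs_eq_zkaroubi_pow:
  "(1 - zb n * zd (n - 1)) ^ n * (1 - zd n * zb (Suc n)) ^ Suc n =
     zkaroubi n ^ n * (1 - zd n * zb (Suc n))"
proof (cases "n = 0")
  case False
  then have n: "1 \<le> n" by simp
  let ?X = "zd n * zb (Suc n)" and ?Y = "zb n * zd (n - 1)"
  have XY: "?X * ?Y = 0"
    using zb_zb[OF n] by (simp add: mult.assoc flip: mult.assoc[of "zb (Suc n)"])
  have "?Y * ?X = zb n * (zd (n - 1) * zd n) * zb (Suc n)"
    by (simp add: mult.assoc)
  then have YX: "?Y * ?X = 0"
    using zd_zd[of "n - 1"] n by simp
  have "zkaroubi n = (1 - ?Y) * (1 - ?X)"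
    using zkaroubi_eq[OF n] YX by (simp add: algebra_simps)
  moreover have "(1 - ?Y) * (1 - ?X) = (1 - ?X) * (1 - ?Y)"
    using XY YX by (simp add: algebra_simps)
  ultimately have "(1 - ?Y) ^ n * (1 - ?X) ^ n = zkaroubi n ^ n"
    by (simp add: mult_power_commuting)
  then show ?thesis by (metis mult.assoc power_Suc2)
qed simp

lemma zd_zkaroubi_pow_zb_tail: "zd n * zkaroubi (Suc n) ^ n * zb_tail (Suc n) = 0"
proof (cases "n = 0")
  case True
  have "eta 0 0 \<circ> eps 1 1 = id" "eta 0 1 \<circ> eps 1 1 = id"
    using eta_comp_eps_id[of 1 0 0] eta_comp_eps_id[of 1 1 0] by simp_all
  then show ?thesis using True
    by (simp add: zd_def zb_tail_def signed_def of_map_comp eval_nat_numeral algebra_simps)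
next
  case False
  then have n: "1 \<le> n" by simp
  have "zd n * zkaroubi (Suc n) ^ n * zb_tail (Suc n) = zkaroubi n ^ n * (zd n * zb_tail (Suc n))"
    using zd_zkaroubi_pow[OF n, of n] by (simp add: mult.assoc)
  also have "\<dots> = - (zkaroubi n ^ n * zb_tail n * zd (n - 1))"
    using zd_zb_tail[OF n] by (simp add: eq_neg_iff_add_eq_0[symmetric] mult.assoc)
  also have "\<dots> = 0" by (simp add: zkaroubi_pow_zb_tail)
  finally show ?thesis .
qed

lemma zd_zkaroubi_pow_face0:
  "zd n * zkaroubi (Suc n) ^ n * of_map (eps (Suc n) 0) = zkaroubi n ^ n - zdwyer_kan n"
proof -
  have "zd n * zkaroubi (Suc n) ^ n * of_map (eps (Suc n) 0) =
      zd_init n * zkaroubi (Suc n) ^ n * of_map (eps (Suc n) 0)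
      + signed (Suc n) (of_map (eta n (Suc n)) * zkaroubi (Suc n) ^ n * of_map (eps (Suc n) 0))"
    by (simp add: zd_split distrib_right signed_mult_left)
  also have "zd_init n * zkaroubi (Suc n) ^ n * of_map (eps (Suc n) 0) = zkaroubi n ^ n"
    using eta_comp_eps_id[of 0 0 n]
    by (simp add: zd_init_zkaroubi_pow mult.assoc of_map_comp of_map_id)
  finally show ?thesis by (simp add: zdwyer_kan_def signed_Suc)
qed

theorem zdwyer_kan_eq:
  "zdwyer_kan n = (1 - zb n * zd (n - 1)) ^ n * (1 - zd n * zb (n + 1)) ^ (n + 1)"
proof -
  have "(1 - zb n * zd (n - 1)) ^ n * (1 - zd n * zb (Suc n)) ^ Suc n =
      zkaroubi n ^ n - zd n * zkaroubi (Suc n) ^ n * zb (Suc n)"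
  proof (cases "n = 0")
    case False
    then show ?thesis
      using zrhs_eq_zkaroubi_pow[of n] zd_zkaroubi_pow[of n n]
      by (simp add: right_diff_distrib mult.assoc)
  qed simp
  also have "\<dots> = zdwyer_kan n"
    using zd_zkaroubi_pow_zb_tail[of n] zd_zkaroubi_pow_face0[of n]
    by (simp add: zb_split distrib_left)
  finally show ?thesis by simp
qed

section \<open>Hom-groups of a preadditive category\<close>

lemma (in comm_group) finprod_inv:
  "f \<in> A \<rightarrow> carrier G \<Longrightarrow> finprod G (\<lambda>x. inv (f x)) A = inv (finprod G f A)"
proof (induction A rule: infinite_finite_induct)
  case (insert a A)
  then show ?case by (simp add: Pi_def inv_mult)
qed simp_all

locale preadditive_category =
  fixes C :: "('o, 'm) preadd_cat"
  assumes preadditive: "preadditive C"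
begin

lemma Comp_hom:
  "a \<in> Ob C \<Longrightarrow> b \<in> Ob C \<Longrightarrow> c \<in> Ob C \<Longrightarrow> f \<in> hom C a b \<Longrightarrow> g \<in> hom C b c \<Longrightarrow>
    Comp C g f \<in> hom C a c"
  using preadditive unfolding preadditive_def by meson

lemma Zero_hom: "a \<in> Ob C \<Longrightarrow> b \<in> Ob C \<Longrightarrow> Zero C a b \<in> hom C a b"
  using preadditive unfolding preadditive_def by meson

lemma Add_hom:
  "a \<in> Ob C \<Longrightarrow> b \<in> Ob C \<Longrightarrow> f \<in> hom C a b \<Longrightarrow> g \<in> hom C a b \<Longrightarrow> Add C f g \<in> hom C a b"
  using preadditive unfolding preadditive_def by meson

lemma Add_commute:
  "a \<in> Ob C \<Longrightarrow> b \<in> Ob C \<Longrightarrow> f \<in> hom C a b \<Longrightarrow> g \<in> hom C a b \<Longrightarrow> Add C f g = Add C g f"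
  using preadditive unfolding preadditive_def by meson

lemma Add_assoc:
  "a \<in> Ob C \<Longrightarrow> b \<in> Ob C \<Longrightarrow> f \<in> hom C a b \<Longrightarrow> g \<in> hom C a b \<Longrightarrow> h \<in> hom C a b \<Longrightarrow>
    Add C (Add C f g) h = Add C f (Add C g h)"
  using preadditive unfolding preadditive_def by meson

lemma Add_Zero: "a \<in> Ob C \<Longrightarrow> b \<in> Ob C \<Longrightarrow> f \<in> hom C a b \<Longrightarrow> Add C f (Zero C a b) = f"
  using preadditive unfolding preadditive_def by meson

lemma Neg_hom: "a \<in> Ob C \<Longrightarrow> b \<in> Ob C \<Longrightarrow> f \<in> hom C a b \<Longrightarrow> Neg C f \<in> hom C a b"
  using preadditive unfolding preadditive_def by meson

lemma Add_Neg: "a \<in> Ob C \<Longrightarrow> b \<in> Ob C \<Longrightarrow> f \<in> hom C a b \<Longrightarrow> Add C f (Neg C f) = Zero C a b"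
  using preadditive unfolding preadditive_def by meson

lemma Comp_Add_right:
  "a \<in> Ob C \<Longrightarrow> b \<in> Ob C \<Longrightarrow> c \<in> Ob C \<Longrightarrow> f \<in> hom C a b \<Longrightarrow> f' \<in> hom C a b \<Longrightarrow>
    g \<in> hom C b c \<Longrightarrow> Comp C g (Add C f f') = Add C (Comp C g f) (Comp C g f')"
  using preadditive unfolding preadditive_def by meson

lemma Comp_Add_left:
  "a \<in> Ob C \<Longrightarrow> b \<in> Ob C \<Longrightarrow> c \<in> Ob C \<Longrightarrow> f \<in> hom C a b \<Longrightarrow> g \<in> hom C b c \<Longrightarrow>
    g' \<in> hom C b c \<Longrightarrow> Comp C (Add C g g') f = Add C (Comp C g f) (Comp C g' f)"
  using preadditive unfolding preadditive_def by meson

(* The additive group of morphisms, written multiplicatively as HOL-Algebra requires, so that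
   finite sums of morphisms are finprod and integer multiples are int_pow. *)
definition hom_group :: "'o \<Rightarrow> 'o \<Rightarrow> 'm monoid" where
  "hom_group a b = \<lparr>carrier = hom C a b, mult = Add C, one = Zero C a b\<rparr>"

lemma hom_group_simps [simp]:
  "carrier (hom_group a b) = hom C a b" "mult (hom_group a b) = Add C" "one (hom_group a b) = Zero C a b"
  by (simp_all add: hom_group_def)

lemma comm_group_hom_group:
  assumes "a \<in> Ob C" "b \<in> Ob C"
  shows "comm_group (hom_group a b)"
proof (rule comm_groupI)
  fix x y z
  assume "x \<in> carrier (hom_group a b)" "y \<in> carrier (hom_group a b)" "z \<in> carrier (hom_group a b)"
  with assms show "x \<otimes>\<^bsub>hom_group a b\<^esub> y \<in> carrier (hom_group a b)"
    "x \<otimes>\<^bsub>hom_group a b\<^esub> y \<otimes>\<^bsub>hom_group a b\<^esub> z = x \<otimes>\<^bsub>hom_group a b\<^esub> (y \<otimes>\<^bsub>hom_group a b\<^esub> z)"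
    by (simp_all add: Add_hom Add_assoc)
  from assms \<open>x \<in> _\<close> \<open>y \<in> _\<close> show "x \<otimes>\<^bsub>hom_group a b\<^esub> y = y \<otimes>\<^bsub>hom_group a b\<^esub> x"
    by (simp add: Add_commute)
next
  show "\<one>\<^bsub>hom_group a b\<^esub> \<in> carrier (hom_group a b)" using assms by (simp add: Zero_hom)
next
  fix x assume "x \<in> carrier (hom_group a b)"
  with assms show "\<one>\<^bsub>hom_group a b\<^esub> \<otimes>\<^bsub>hom_group a b\<^esub> x = x"
    "\<exists>y\<in>carrier (hom_group a b). y \<otimes>\<^bsub>hom_group a b\<^esub> x = \<one>\<^bsub>hom_group a b\<^esub>"
    by (auto simp: Add_commute Zero_hom Add_Zero Neg_hom Add_Neg intro!: bexI[of _ "Neg C x"])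
qed

lemma hom_group_inv:
  assumes "a \<in> Ob C" "b \<in> Ob C" "f \<in> hom C a b"
  shows "inv\<^bsub>hom_group a b\<^esub> f = Neg C f"
proof -
  interpret comm_group "hom_group a b" using assms(1,2) by (rule comm_group_hom_group)
  show ?thesis using assms by (intro inv_equality) (simp_all add: Neg_hom Add_commute Add_Neg)
qed

lemma hom_group_int_pow_hom [simp]:
  assumes "a \<in> Ob C" "b \<in> Ob C" "f \<in> hom C a b"
  shows "f [^]\<^bsub>hom_group a b\<^esub> (k::int) \<in> hom C a b"
proof -
  interpret comm_group "hom_group a b" using assms(1,2) by (rule comm_group_hom_group)
  show ?thesis using int_pow_closed[of f k] assms(3) by simp
qed

lemma Comp_Zero_right:
  assumes "a \<in> Ob C" "b \<in> Ob C" "c \<in> Ob C" "g \<in> hom C b c"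
  shows "Comp C g (Zero C a b) = Zero C a c"
proof -
  interpret comm_group "hom_group a c" using assms by (intro comm_group_hom_group)
  let ?z = "Comp C g (Zero C a b)"
  have "Add C ?z ?z = Comp C g (Add C (Zero C a b) (Zero C a b))"
    using assms by (simp add: Comp_Add_right Zero_hom)
  then have "?z \<otimes>\<^bsub>hom_group a c\<^esub> ?z = ?z" using assms by (simp add: Add_Zero Zero_hom)
  then show ?thesis using assms l_cancel_one[of ?z ?z] by (simp add: Comp_hom Zero_hom)
qed

lemma Comp_Zero_left:
  assumes "a \<in> Ob C" "b \<in> Ob C" "c \<in> Ob C" "f \<in> hom C a b"
  shows "Comp C (Zero C b c) f = Zero C a c"
proof -
  interpret comm_group "hom_group a c" using assms by (intro comm_group_hom_group)
  let ?z = "Comp C (Zero C b c) f"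
  have "Add C ?z ?z = Comp C (Add C (Zero C b c) (Zero C b c)) f"
    using assms by (simp add: Comp_Add_left Zero_hom)
  then have "?z \<otimes>\<^bsub>hom_group a c\<^esub> ?z = ?z" using assms by (simp add: Add_Zero Zero_hom)
  then show ?thesis using assms l_cancel_one[of ?z ?z] by (simp add: Comp_hom Zero_hom)
qed

lemma Comp_Neg_right:
  assumes "a \<in> Ob C" "b \<in> Ob C" "c \<in> Ob C" "f \<in> hom C a b" "g \<in> hom C b c"
  shows "Comp C g (Neg C f) = Neg C (Comp C g f)"
proof -
  interpret comm_group "hom_group a c" using assms by (intro comm_group_hom_group)
  have "Add C (Comp C g (Neg C f)) (Comp C g f) = Comp C g (Add C (Neg C f) f)"
    using assms by (simp add: Comp_Add_right Neg_hom)
  also have "\<dots> = Zero C a c"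
    using assms by (simp add: Add_commute Neg_hom Add_Neg Comp_Zero_right)
  finally have "Comp C g (Neg C f) = inv\<^bsub>hom_group a c\<^esub> (Comp C g f)"
    using assms by (intro inv_equality[symmetric]) (simp_all add: Comp_hom Neg_hom)
  then show ?thesis using assms by (simp add: hom_group_inv Comp_hom)
qed

lemma Comp_Neg_left:
  assumes "a \<in> Ob C" "b \<in> Ob C" "c \<in> Ob C" "f \<in> hom C a b" "g \<in> hom C b c"
  shows "Comp C (Neg C g) f = Neg C (Comp C g f)"
proof -
  interpret comm_group "hom_group a c" using assms by (intro comm_group_hom_group)
  have "Add C (Comp C (Neg C g) f) (Comp C g f) = Comp C (Add C (Neg C g) g) f"
    using assms by (simp add: Comp_Add_left Neg_hom)
  also have "\<dots> = Zero C a c"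
    using assms by (simp add: Add_commute Neg_hom Add_Neg Comp_Zero_left)
  finally have "Comp C (Neg C g) f = inv\<^bsub>hom_group a c\<^esub> (Comp C g f)"
    using assms by (intro inv_equality[symmetric]) (simp_all add: Comp_hom Neg_hom)
  then show ?thesis using assms by (simp add: hom_group_inv Comp_hom)
qed

end

section \<open>Realizing the monoid ring in a duplicial module\<close>

lemma keys_diff_subset:
  "Poly_Mapping.keys x \<subseteq> S \<Longrightarrow> Poly_Mapping.keys y \<subseteq> S \<Longrightarrow> Poly_Mapping.keys (x - y) \<subseteq> S"
  using keys_diff[of x y] by blast

locale duplicial_module = preadditive_category C
  for C :: "('o, 'm) preadd_cat" +
  fixes MO :: "nat \<Rightarrow> 'o"
    and MM :: "nat \<Rightarrow> nat \<Rightarrow> (int \<Rightarrow> int) \<Rightarrow> 'm"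
  assumes duplicial: "duplicial C MO MM"
begin

lemma MO_Ob [simp]: "MO k \<in> Ob C"
  using duplicial by (simp add: duplicial_def)

lemma MM_hom: "lam_mor m n f \<Longrightarrow> MM m n f \<in> hom C (MO n) (MO m)"
  using duplicial by (simp add: duplicial_def)

lemma MM_id: "MM m m id = Id C (MO m)"
  using duplicial by (simp add: duplicial_def)

lemma MM_comp: "lam_mor l m f \<Longrightarrow> lam_mor m n g \<Longrightarrow> MM l n (g \<circ> f) = Comp C (MM l m f) (MM m n g)"
  using duplicial by (simp add: duplicial_def)

definition lam_maps :: "nat \<Rightarrow> nat \<Rightarrow> endo set" where
  "lam_maps m n = {f. lam_mor m n (app f)}"

(* The realization of x = \<Sum> c_f f is \<Sum> c_f M(f). It is only meaningful when x is supported
   on maps [m] -> [n] of \<Lambda>_+, a condition recorded by the predicate realizes below. *)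
definition realize :: "nat \<Rightarrow> nat \<Rightarrow> zendo \<Rightarrow> 'm" where
  "realize m n x = finprod (hom_group (MO n) (MO m))
     (\<lambda>f. MM m n (app f) [^]\<^bsub>hom_group (MO n) (MO m)\<^esub> Poly_Mapping.lookup x f) (Poly_Mapping.keys x)"

lemma keys_mult_lam_maps:
  assumes "Poly_Mapping.keys x \<subseteq> lam_maps m k" "Poly_Mapping.keys y \<subseteq> lam_maps k n"
  shows "Poly_Mapping.keys (y * x) \<subseteq> lam_maps m n"
proof
  fix h assume "h \<in> Poly_Mapping.keys (y * x)"
  then obtain f g where "h = g + f" "g \<in> Poly_Mapping.keys y" "f \<in> Poly_Mapping.keys x"
    using keys_mult[of y x] by blast
  with assms lam_mor_comp[of m k "app f" n "app g"] show "h \<in> lam_maps m n"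
    by (auto simp: lam_maps_def plus_endo_def)
qed

lemma realize_superset:
  assumes "finite S" "Poly_Mapping.keys x \<subseteq> S" "S \<subseteq> lam_maps m n"
  shows "realize m n x = finprod (hom_group (MO n) (MO m))
      (\<lambda>f. MM m n (app f) [^]\<^bsub>hom_group (MO n) (MO m)\<^esub> Poly_Mapping.lookup x f) S"
proof -
  interpret comm_group "hom_group (MO n) (MO m)" by (rule comm_group_hom_group) simp_all
  show ?thesis unfolding realize_def
  proof (rule finprod_mono_neutral_cong_left)
    show "(\<lambda>f. MM m n (app f) [^]\<^bsub>hom_group (MO n) (MO m)\<^esub> Poly_Mapping.lookup x f) \<in> S \<rightarrow> carrier (hom_group (MO n) (MO m))"
      using assms(3) by (auto simp: lam_maps_def MM_hom)
  qed (use assms in \<open>auto simp: in_keys_iff\<close>)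
qed

lemma realize_hom: "Poly_Mapping.keys x \<subseteq> lam_maps m n \<Longrightarrow> realize m n x \<in> hom C (MO n) (MO m)"
proof -
  assume "Poly_Mapping.keys x \<subseteq> lam_maps m n"
  interpret comm_group "hom_group (MO n) (MO m)" by (rule comm_group_hom_group) simp_all
  have "realize m n x \<in> carrier (hom_group (MO n) (MO m))" unfolding realize_def
    using \<open>Poly_Mapping.keys x \<subseteq> lam_maps m n\<close> by (intro finprod_closed) (auto simp: lam_maps_def MM_hom)
  then show ?thesis by simp
qed

lemma realize_zero: "realize m n 0 = Zero C (MO n) (MO m)"
proof -
  interpret comm_group "hom_group (MO n) (MO m)" by (rule comm_group_hom_group) simp_all
  show ?thesis by (simp add: realize_def)
qed

lemma realize_frag_of: "f \<in> lam_maps m n \<Longrightarrow> realize m n (frag_of f) = MM m n (app f)"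
proof -
  assume "f \<in> lam_maps m n"
  interpret comm_group "hom_group (MO n) (MO m)" by (rule comm_group_hom_group) simp_all
  have "MM m n (app f) \<in> hom C (MO n) (MO m)"
    using \<open>f \<in> lam_maps m n\<close> by (simp add: lam_maps_def MM_hom)
  then show ?thesis by (simp add: realize_def Add_Zero)
qed

lemma realize_add:
  assumes "Poly_Mapping.keys x \<subseteq> lam_maps m n" "Poly_Mapping.keys y \<subseteq> lam_maps m n"
  shows "realize m n (x + y) = Add C (realize m n x) (realize m n y)"
proof -
  interpret comm_group "hom_group (MO n) (MO m)" by (rule comm_group_hom_group) simp_all
  let ?S = "Poly_Mapping.keys x \<union> Poly_Mapping.keys y"
  let ?g = "\<lambda>(z::zendo) f. MM m n (app f) [^]\<^bsub>hom_group (MO n) (MO m)\<^esub> Poly_Mapping.lookup z f"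
  have S: "finite ?S" "?S \<subseteq> lam_maps m n" using assms by auto
  have M: "MM m n (app f) \<in> hom C (MO n) (MO m)" if "f \<in> ?S" for f
    using that S by (auto simp: lam_maps_def MM_hom)
  have g: "?g z \<in> ?S \<rightarrow> carrier (hom_group (MO n) (MO m))" for z
    using M by (auto simp: Pi_iff)
  have "realize m n (x + y) = finprod (hom_group (MO n) (MO m)) (?g (x + y)) ?S"
    using S keys_add[of x y] by (intro realize_superset) auto
  also have "\<dots> = finprod (hom_group (MO n) (MO m)) (\<lambda>f. ?g x f \<otimes>\<^bsub>hom_group (MO n) (MO m)\<^esub> ?g y f) ?S"
    using g[of "x + y"] M by (intro finprod_cong') (simp_all add: lookup_add int_pow_mult Add_hom)
  also have "\<dots> = finprod (hom_group (MO n) (MO m)) (?g x) ?S \<otimes>\<^bsub>hom_group (MO n) (MO m)\<^esub>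
      finprod (hom_group (MO n) (MO m)) (?g y) ?S"
    by (rule finprod_multf[OF g g])
  also have "\<dots> = Add C (realize m n x) (realize m n y)"
    using realize_superset[of ?S x m n] realize_superset[of ?S y m n] S by simp
  finally show ?thesis .
qed

lemma realize_uminus:
  assumes "Poly_Mapping.keys x \<subseteq> lam_maps m n"
  shows "realize m n (- x) = Neg C (realize m n x)"
proof -
  interpret comm_group "hom_group (MO n) (MO m)" by (rule comm_group_hom_group) simp_all
  let ?g = "\<lambda>f. MM m n (app f) [^]\<^bsub>hom_group (MO n) (MO m)\<^esub> Poly_Mapping.lookup x f"
  have M: "MM m n (app f) \<in> hom C (MO n) (MO m)" if "f \<in> Poly_Mapping.keys x" for f
    using that assms by (auto simp: lam_maps_def MM_hom)
  then have g: "?g \<in> Poly_Mapping.keys x \<rightarrow> carrier (hom_group (MO n) (MO m))"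
    by (auto simp: Pi_iff)
  have "realize m n (- x) =
      finprod (hom_group (MO n) (MO m)) (\<lambda>f. inv\<^bsub>hom_group (MO n) (MO m)\<^esub> (?g f)) (Poly_Mapping.keys x)"
    unfolding realize_def using g M
    by (intro finprod_cong') (auto simp: int_pow_neg Pi_iff hom_group_inv intro!: Neg_hom)
  also have "\<dots> = Neg C (realize m n x)"
    using g realize_hom[OF assms] by (simp add: finprod_inv realize_def hom_group_inv)
  finally show ?thesis .
qed

lemma realize_diff:
  assumes "Poly_Mapping.keys x \<subseteq> lam_maps m n" "Poly_Mapping.keys y \<subseteq> lam_maps m n"
  shows "realize m n (x - y) = Add C (realize m n x) (Neg C (realize m n y))"
  using realize_add[of x m n "- y"] realize_uminus[of y m n] assms by simp


lemma realize_frag_of_mult: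
  assumes g: "g \<in> lam_maps k n" and x: "Poly_Mapping.keys x \<subseteq> lam_maps m k"
  shows "realize m n (frag_of g * x) = Comp C (realize m k x) (MM k n (app g))"
proof -
  have Mg: "MM k n (app g) \<in> hom C (MO n) (MO k)" using g by (simp add: lam_maps_def MM_hom)
  have "Poly_Mapping.keys x \<subseteq> lam_maps m k \<and>
      realize m n (frag_of g * x) = Comp C (realize m k x) (MM k n (app g))"
    using x
  proof (induction x rule: frag_induction)
    case zero
    show ?case using Comp_Zero_left[OF MO_Ob MO_Ob MO_Ob Mg] by (simp add: realize_zero)
  next
    case (one f)
    then have "lam_mor m k (app f)" "lam_mor k n (app g)" using g by (auto simp: lam_maps_def)
    moreover have "frag_of g * frag_of f = frag_of (Endo (app g \<circ> app f))"
      by (simp add: mult_single plus_endo_def)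
    ultimately show ?case
      using one lam_mor_comp by (simp add: realize_frag_of lam_maps_def MM_comp)
  next
    case (diff a b)
    have ga: "Poly_Mapping.keys (frag_of g * a) \<subseteq> lam_maps m n"
      and gb: "Poly_Mapping.keys (frag_of g * b) \<subseteq> lam_maps m n"
      using diff g keys_mult_lam_maps[of _ m k "frag_of g" n] by auto
    have "realize m n (frag_of g * (a - b)) = realize m n (frag_of g * a - frag_of g * b)"
      by (simp add: right_diff_distrib)
    also have "\<dots> = Add C (Comp C (realize m k a) (MM k n (app g)))
        (Neg C (Comp C (realize m k b) (MM k n (app g))))"
      using ga gb diff by (simp add: realize_diff)
    also have "\<dots> = Comp C (realize m k (a - b)) (MM k n (app g))"
    proof -
      have "realize m k a \<in> hom C (MO k) (MO m)" "realize m k b \<in> hom C (MO k) (MO m)"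
        using diff by (simp_all add: realize_hom)
      then show ?thesis
        using diff Comp_Add_left[OF MO_Ob MO_Ob MO_Ob Mg _ Neg_hom] Comp_Neg_left[OF MO_Ob MO_Ob MO_Ob Mg]
        by (simp add: realize_diff)
    qed
    finally show ?case using diff keys_diff_subset by blast
  qed
  then show ?thesis ..
qed

lemma realize_mult:
  assumes x: "Poly_Mapping.keys x \<subseteq> lam_maps m k" and y: "Poly_Mapping.keys y \<subseteq> lam_maps k n"
  shows "realize m n (y * x) = Comp C (realize m k x) (realize k n y)"
proof -
  have Mx: "realize m k x \<in> hom C (MO k) (MO m)" using x by (rule realize_hom)
  have "Poly_Mapping.keys y \<subseteq> lam_maps k n \<and>
      realize m n (y * x) = Comp C (realize m k x) (realize k n y)"
    using y
  proof (induction y rule: frag_induction)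
    case zero
    show ?case using Comp_Zero_right[OF MO_Ob MO_Ob MO_Ob Mx] by (simp add: realize_zero)
  next
    case (one g)
    then show ?case using x by (simp add: realize_frag_of_mult realize_frag_of)
  next
    case (diff a b)
    have ax: "Poly_Mapping.keys (a * x) \<subseteq> lam_maps m n"
      and bx: "Poly_Mapping.keys (b * x) \<subseteq> lam_maps m n"
      using diff keys_mult_lam_maps[OF x] by auto
    have "realize m n ((a - b) * x) = realize m n (a * x - b * x)"
      by (simp add: left_diff_distrib)
    also have "\<dots> = Add C (Comp C (realize m k x) (realize k n a))
        (Neg C (Comp C (realize m k x) (realize k n b)))"
      using ax bx diff by (simp add: realize_diff)
    also have "\<dots> = Comp C (realize m k x) (realize k n (a - b))"
    proof -
      have "realize k n a \<in> hom C (MO n) (MO k)" "realize k n b \<in> hom C (MO n) (MO k)"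
        using diff by (simp_all add: realize_hom)
      then show ?thesis
        using diff Comp_Add_right[OF MO_Ob MO_Ob MO_Ob _ Neg_hom Mx] Comp_Neg_right[OF MO_Ob MO_Ob MO_Ob _ Mx]
        by (simp add: realize_diff)
    qed
    finally show ?case using diff keys_diff_subset by blast
  qed
  then show ?thesis ..
qed


definition realizes :: "nat \<Rightarrow> nat \<Rightarrow> zendo \<Rightarrow> 'm \<Rightarrow> bool" where
  "realizes m n x X \<longleftrightarrow> Poly_Mapping.keys x \<subseteq> lam_maps m n \<and> realize m n x = X"

lemma realizes_unique: "realizes m n x X \<Longrightarrow> realizes m n x Y \<Longrightarrow> X = Y"
  by (simp add: realizes_def)

lemma realizes_zero: "realizes m n 0 (Zero C (MO n) (MO m))"
  by (simp add: realizes_def realize_zero)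

lemma realizes_of_map: "lam_mor m n f \<Longrightarrow> realizes m n (of_map f) (MM m n f)"
  by (simp add: realizes_def of_map_def lam_maps_def realize_frag_of)

lemma realizes_one: "realizes m m 1 (Id C (MO m))"
  using realizes_of_map[OF lam_mor_id, of m] by (simp add: of_map_id MM_id)

lemma realizes_add: "realizes m n x X \<Longrightarrow> realizes m n y Y \<Longrightarrow> realizes m n (x + y) (Add C X Y)"
  unfolding realizes_def using keys_add[of x y] by (auto simp: realize_add)

lemma realizes_uminus: "realizes m n x X \<Longrightarrow> realizes m n (- x) (Neg C X)"
  unfolding realizes_def by (auto simp: realize_uminus)

lemma realizes_mult: "realizes m k x X \<Longrightarrow> realizes k n y Y \<Longrightarrow> realizes m n (y * x) (Comp C X Y)"
  unfolding realizes_def using keys_mult_lam_maps[of x m k y n] realize_mult[of x m k y n] by auto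

lemma realizes_signed: "realizes m n x X \<Longrightarrow> realizes m n (signed k x) (sgn_mor C k X)"
  by (simp add: signed_def sgn_mor_def realizes_uminus)

lemma realizes_alt_sum:
  assumes "\<And>i. i < k \<Longrightarrow> realizes m n (x i) (X i)"
  shows "realizes m n (\<Sum>i<k. signed i (x i)) (alt_sum C (MO n) (MO m) X k)"
proof -
  have "realizes m n (sum_list (map (\<lambda>i. signed i (x i)) is))
      (foldr (\<lambda>i acc. Add C (sgn_mor C i (X i)) acc) is (Zero C (MO n) (MO m)))"
    if "\<forall>i\<in>set is. i < k" for "is"
    using that by (induction "is") (simp_all add: realizes_zero realizes_add realizes_signed assms)
  moreover have "(\<Sum>i<k. signed i (x i)) = sum_list (map (\<lambda>i. signed i (x i)) [0..<k])"
    by (induction k) simp_all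
  ultimately show ?thesis unfolding alt_sum_def by simp
qed

lemma realizes_power: "realizes m m x X \<Longrightarrow> realizes m m (x ^ k) (mpow C (MO m) X k)"
proof (induction k)
  case 0
  then show ?case by (simp add: mpow_def realizes_one)
next
  case (Suc k)
  then have "realizes m m (x ^ k * x) (Comp C X (mpow C (MO m) X k))" by (simp add: realizes_mult)
  then show ?case by (simp add: mpow_def power_commutes)
qed

lemma realizes_one_minus: "realizes m m x X \<Longrightarrow> realizes m m (1 - x) (one_minus C (MO m) X)"
  using realizes_add[OF realizes_one realizes_uminus, of m x X] by (simp add: one_minus_def)

lemma realizes_face: "1 \<le> n \<Longrightarrow> i \<le> n \<Longrightarrow> realizes (n - 1) n (of_map (eps n i)) (face MM n i)"
  unfolding face_def by (intro realizes_of_map lam_mor_eps)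

lemma realizes_degen: "i \<le> n + 1 \<Longrightarrow> realizes (n + 1) n (of_map (eta n i)) (degen MM n i)"
  unfolding degen_def by (intro realizes_of_map lam_mor_eta)

lemma realizes_bop: "1 \<le> n \<Longrightarrow> realizes (n - 1) n (zb n) (bop C MO MM n)"
  unfolding zb_def bop_def
  using realizes_alt_sum[of "Suc n" "n - 1" n "\<lambda>i. of_map (eps n i)" "face MM n"] realizes_face
  by simp

lemma realizes_dop: "realizes (n + 1) n (zd n) (dop C MO MM n)"
  unfolding zd_def dop_def
  using realizes_alt_sum[of "Suc (Suc n)" "n + 1" n "\<lambda>i. of_map (eta n i)" "degen MM n"] realizes_degen
  by (simp add: numeral_2_eq_2)

lemma realizes_karoubi:
  assumes "1 \<le> n"
  shows "realizes n n (zkaroubi n) (karoubi C MM n)"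
proof -
  have "realizes n n (of_map (kar_pos n)) (Comp C (face MM (n + 1) 0) (degen MM n (n + 1)))"
    using realizes_mult[OF realizes_face[of "n + 1" 0] realizes_degen[of "n + 1" n]]
    by (simp add: kar_pos_def of_map_comp)
  moreover have "realizes n n (of_map (kar_neg n)) (Comp C (degen MM (n - 1) n) (face MM n 0))"
    using realizes_mult[OF realizes_degen[of n "n - 1"] realizes_face[OF assms, of 0]] assms
    by (simp add: kar_neg_def of_map_comp)
  ultimately show ?thesis
    unfolding zkaroubi_def karoubi_def diff_conv_add_uminus
    by (intro realizes_signed realizes_add realizes_uminus)
qed

lemma realizes_dwyer_kan: "realizes n n (zdwyer_kan n) (dwyer_kan C MO MM n)"
proof -
  have "realizes (n + 1) (n + 1) (zkaroubi (n + 1) ^ n) (mpow C (MO (n + 1)) (karoubi C MM (n + 1)) n)"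
    by (intro realizes_power realizes_karoubi) simp
  then have "realizes n n (of_map (eta n (n + 1)) * zkaroubi (n + 1) ^ n * of_map (eps (n + 1) 0))
      (Comp C (face MM (n + 1) 0)
        (Comp C (mpow C (MO (n + 1)) (karoubi C MM (n + 1)) n) (degen MM n (n + 1))))"
    using realizes_mult[OF realizes_face[of "n + 1" 0] realizes_mult[OF _ realizes_degen[of "n + 1" n]]]
    by simp
  then show ?thesis unfolding zdwyer_kan_def dwyer_kan_def by (rule realizes_signed)
qed

lemma realizes_rhs:
  "realizes n n ((1 - zb n * zd (n - 1)) ^ n * (1 - zd n * zb (n + 1)) ^ (n + 1))
     (Comp C
       (mpow C (MO n) (one_minus C (MO n) (Comp C (bop C MO MM (n + 1)) (dop C MO MM n))) (n + 1))
       (mpow C (MO n) (one_minus C (MO n) (Comp C (dop C MO MM (n - 1)) (bop C MO MM n))) n))"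
proof (rule realizes_mult)
  have "realizes n n (zd n * zb (n + 1)) (Comp C (bop C MO MM (n + 1)) (dop C MO MM n))"
    using realizes_mult[OF realizes_bop[of "n + 1"] realizes_dop[of n]] by simp
  then show "realizes n n ((1 - zd n * zb (n + 1)) ^ (n + 1))
      (mpow C (MO n) (one_minus C (MO n) (Comp C (bop C MO MM (n + 1)) (dop C MO MM n))) (n + 1))"
    by (intro realizes_power realizes_one_minus)
  show "realizes n n ((1 - zb n * zd (n - 1)) ^ n)
      (mpow C (MO n) (one_minus C (MO n) (Comp C (dop C MO MM (n - 1)) (bop C MO MM n))) n)"
  proof (cases "n = 0")
    case True
    then show ?thesis by (simp add: mpow_def realizes_one)
  next
    case False
    then have "realizes n n (zb n * zd (n - 1)) (Comp C (dop C MO MM (n - 1)) (bop C MO MM n))"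
      using realizes_mult[OF _ realizes_bop] realizes_dop[of "n - 1"] by simp
    then show ?thesis by (intro realizes_power realizes_one_minus)
  qed
qed

end

theorem mainTheorem15:
  fixes C :: "('o, 'm) preadd_cat"
    and MO :: "nat \<Rightarrow> 'o"
    and MM :: "nat \<Rightarrow> nat \<Rightarrow> (int \<Rightarrow> int) \<Rightarrow> 'm"
    and n :: nat
  assumes "preadditive C"
    and "duplicial C MO MM"
  shows "dwyer_kan C MO MM n =
           Comp C
             (mpow C (MO n) (one_minus C (MO n) (Comp C (bop C MO MM (n + 1)) (dop C MO MM n))) (n + 1))
             (mpow C (MO n) (one_minus C (MO n) (Comp C (dop C MO MM (n - 1)) (bop C MO MM n))) n)"
proof -
  interpret duplicial_module C MO MM
    using assms by unfold_locales
  show ?thesis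
    using realizes_dwyer_kan[of n] realizes_rhs[of n] zdwyer_kan_eq[of n]
    by (metis realizes_unique)
qed

end
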